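(* Let $G_{\lambda,k}$ be a skeleton of a connected graph $G$, and let $G''=G_{(\lambda,k)_{(2,2)}}$ be the $(2,2)$-skeleton of $G_{\lambda,k}$. If two vertices of $G''$ are $2$-disjoint in $G''$, then the sets of vertices of $G_{\lambda,k}$ they come from (their preimages under the natural map $G_{\lambda,k}\to G''$) are $3$-disjoint in $G_{\lambda,k}$.
   Context: $d$ is the graph metric of the relevant graph. Sets $X,Y$ are $r$-disjoint if $d(a,b)>r$ for all $a\in X,b\in Y$. A set $X$ is $k$-connected if any two of its points are joined by a finite sequence in $X$ with consecutive distances $\le k$. Skeleton $\Gamma_{\lambda,k}$ of a connected graph $\Gamma$ (root $x_0$, scale $\lambda\ge1$, connectivity $k\ge1$): layers $A_{N,\lambda}=\{x: N\lambda<d(x,x_0)\le(N+1)\lambda\}$, $N\in\mathbb Z$; blocks are the maximal $k$-connected subsets of layers (distances in $\Gamma$); $\Gamma_{\lambda,k}$ has a vertex per block and an edge between two blocks iff an edge of $\Gamma$ joins them; the natural map sends each vertex to its block. $G_{(\lambda,k)_{(2,2)}}$ is the skeleton of the graph $G_{\lambda,k}$ (with its own metric) with scale $2$ and connectivity $2$, rooted at the block containing the root of $G$. *)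

theory Defs
  imports Main "HOL.Real"
begin

definition walk :: "'a set \<Rightarrow> ('a \<Rightarrow> 'a \<Rightarrow> bool) \<Rightarrow> 'a \<Rightarrow> 'a \<Rightarrow> nat \<Rightarrow> bool" where
  "walk V E x y n \<longleftrightarrow> (\<exists>f. f 0 = x \<and> f n = y \<and> (\<forall>i\<le>n. f i \<in> V) \<and> (\<forall>i<n. E (f i) (f (Suc i))))"

definition connected_graph :: "'a set \<Rightarrow> ('a \<Rightarrow> 'a \<Rightarrow> bool) \<Rightarrow> bool" where
  "connected_graph V E \<longleftrightarrow> V \<noteq> {} \<and> (\<forall>x y. E x y \<longrightarrow> x \<in> V \<and> y \<in> V) \<and>
     (\<forall>x y. E x y \<longrightarrow> E y x) \<and> (\<forall>x\<in>V. \<forall>y\<in>V. \<exists>n. walk V E x y n)"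

text \<open>Graph metric (meaningful for connected graphs).\<close>
definition gdist :: "'a set \<Rightarrow> ('a \<Rightarrow> 'a \<Rightarrow> bool) \<Rightarrow> 'a \<Rightarrow> 'a \<Rightarrow> nat" where
  "gdist V E x y = (LEAST n. walk V E x y n)"

definition r_disjoint :: "'a set \<Rightarrow> ('a \<Rightarrow> 'a \<Rightarrow> bool) \<Rightarrow> real \<Rightarrow> 'a set \<Rightarrow> 'a set \<Rightarrow> bool" where
  "r_disjoint V E r X Y \<longleftrightarrow> (\<forall>a\<in>X. \<forall>b\<in>Y. real (gdist V E a b) > r)"

definition k_connected :: "'a set \<Rightarrow> ('a \<Rightarrow> 'a \<Rightarrow> bool) \<Rightarrow> real \<Rightarrow> 'a set \<Rightarrow> bool" where
  "k_connected V E k X \<longleftrightarrow> (\<forall>a\<in>X. \<forall>b\<in>X. \<exists>n f. f 0 = a \<and> f n = b \<and> (\<forall>i\<le>n. f i \<in> X) \<and>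
       (\<forall>i<n. real (gdist V E (f i) (f (Suc i))) \<le> k))"

definition layer :: "'a set \<Rightarrow> ('a \<Rightarrow> 'a \<Rightarrow> bool) \<Rightarrow> 'a \<Rightarrow> real \<Rightarrow> int \<Rightarrow> 'a set" where
  "layer V E x0 lam N = {x \<in> V. real_of_int N * lam < real (gdist V E x x0) \<and>
                                   real (gdist V E x x0) \<le> (real_of_int N + 1) * lam}"

definition skel_V :: "'a set \<Rightarrow> ('a \<Rightarrow> 'a \<Rightarrow> bool) \<Rightarrow> 'a \<Rightarrow> real \<Rightarrow> real \<Rightarrow> 'a set set" where
  "skel_V V E x0 lam k = {B. B \<noteq> {} \<and> (\<exists>N. B \<subseteq> layer V E x0 lam N \<and> k_connected V E k B \<and>
      (\<forall>C. B \<subseteq> C \<and> C \<subseteq> layer V E x0 lam N \<and> k_connected V E k C \<longrightarrow> C = B))}"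

definition skel_E :: "'a set \<Rightarrow> ('a \<Rightarrow> 'a \<Rightarrow> bool) \<Rightarrow> 'a \<Rightarrow> real \<Rightarrow> real \<Rightarrow> 'a set \<Rightarrow> 'a set \<Rightarrow> bool" where
  "skel_E V E x0 lam k B C \<longleftrightarrow> B \<in> skel_V V E x0 lam k \<and> C \<in> skel_V V E x0 lam k \<and> B \<noteq> C \<and>
      (\<exists>x\<in>B. \<exists>y\<in>C. E x y)"

definition nat_map :: "'a set \<Rightarrow> ('a \<Rightarrow> 'a \<Rightarrow> bool) \<Rightarrow> 'a \<Rightarrow> real \<Rightarrow> real \<Rightarrow> 'a \<Rightarrow> 'a set" where
  "nat_map V E x0 lam k x = (THE B. B \<in> skel_V V E x0 lam k \<and> x \<in> B)"

end

theory Submission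
  imports Defs
begin

(* Let a and b be vertices of the skeleton at distance at most 3, joined by a path a, c, d, b of
   unit steps. The vertices a, c, d are pairwise within distance 2, so their distances to the root
   differ by at most 2 and their layer indices at scale 2 pairwise by at most 1. Hence two of them
   share a layer, and being within distance 2 they lie in one block of the (2,2)-skeleton. The image
   path P, ..., Q then repeats a vertex, so P and Q are at distance at most 2. *)

definition graph_rel :: "'a set \<Rightarrow> ('a \<Rightarrow> 'a \<Rightarrow> bool) \<Rightarrow> ('a \<times> 'a) set" where
  "graph_rel V E = {(x, y). x \<in> V \<and> y \<in> V \<and> E x y}"

lemma graph_rel_relpow_closed:
  assumes "(x, y) \<in> graph_rel V E ^^ n" "x \<in> V"
  shows "y \<in> V"
  using assms by (cases n) (auto simp: graph_rel_def elim: relpow_Suc_E)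

lemma walk_iff_relpow: "walk V E x y n \<longleftrightarrow> x \<in> V \<and> (x, y) \<in> graph_rel V E ^^ n"
proof
  assume "walk V E x y n"
  then obtain f where "f 0 = x" "f n = y" "\<forall>i\<le>n. f i \<in> V" "\<forall>i<n. E (f i) (f (Suc i))"
    unfolding walk_def by blast
  then show "x \<in> V \<and> (x, y) \<in> graph_rel V E ^^ n"
    unfolding relpow_fun_conv graph_rel_def by auto
next
  assume "x \<in> V \<and> (x, y) \<in> graph_rel V E ^^ n"
  then obtain f where f: "f 0 = x" "f n = y" "\<forall>i<n. (f i, f (Suc i)) \<in> graph_rel V E" "x \<in> V"
    unfolding relpow_fun_conv by blast
  have "f i \<in> V" if "i \<le> n" for i
    using that f by (cases i) (auto simp: graph_rel_def)
  with f show "walk V E x y n"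
    unfolding walk_def graph_rel_def by blast
qed

lemma relpow_sym:
  assumes "sym R" "(x, y) \<in> R ^^ n"
  shows "(y, x) \<in> R ^^ n"
  using assms(2)
proof (induction n arbitrary: y)
  case (Suc n)
  then obtain z where "(x, z) \<in> R ^^ n" "(z, y) \<in> R" by (blast elim: relpow_Suc_E)
  with Suc.IH assms(1) show ?case by (blast intro: relpow_Suc_I2 dest: symD)
qed simp

lemma connected_graph_sym: "connected_graph V E \<Longrightarrow> E x y \<Longrightarrow> E y x"
  unfolding connected_graph_def by blast

lemma sym_graph_rel: "connected_graph V E \<Longrightarrow> sym (graph_rel V E)"
  unfolding graph_rel_def sym_def by (auto dest: connected_graph_sym)

lemma gdist_sym:
  assumes "connected_graph V E"
  shows "gdist V E x y = gdist V E y x"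
proof -
  have "walk V E y x n" if "walk V E x y n" for x y n
  proof -
    have "x \<in> V" "(x, y) \<in> graph_rel V E ^^ n"
      using that by (simp_all add: walk_iff_relpow)
    then show ?thesis
      using graph_rel_relpow_closed relpow_sym[OF sym_graph_rel[OF assms]]
      by (simp add: walk_iff_relpow)
  qed
  then have "walk V E x y = walk V E y x"
    by blast
  then show ?thesis
    unfolding gdist_def by simp
qed

lemma gdist_le: "x \<in> V \<Longrightarrow> (x, y) \<in> graph_rel V E ^^ n \<Longrightarrow> gdist V E x y \<le> n"
  unfolding gdist_def by (rule Least_le) (simp add: walk_iff_relpow)

lemma connected_graph_rtrancl:
  "connected_graph V E \<Longrightarrow> x \<in> V \<Longrightarrow> y \<in> V \<Longrightarrow> (x, y) \<in> (graph_rel V E)\<^sup>*"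
  unfolding connected_graph_def rtrancl_power walk_iff_relpow by blast

lemma connected_graphI:
  assumes "V \<noteq> {}" "\<And>x y. E x y \<Longrightarrow> x \<in> V \<and> y \<in> V" "\<And>x y. E x y \<Longrightarrow> E y x"
    and "\<And>x y. x \<in> V \<Longrightarrow> y \<in> V \<Longrightarrow> (x, y) \<in> (graph_rel V E)\<^sup>*"
  shows "connected_graph V E"
  using assms unfolding connected_graph_def rtrancl_power walk_iff_relpow by blast

lemma gdist_relpow:
  assumes "connected_graph V E" "x \<in> V" "y \<in> V"
  shows "(x, y) \<in> graph_rel V E ^^ gdist V E x y"
proof -
  obtain n where "walk V E x y n"
    using assms unfolding connected_graph_def by blast
  then have "walk V E x y (gdist V E x y)"
    unfolding gdist_def by (rule LeastI)
  then show ?thesis by (simp add: walk_iff_relpow)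
qed

lemma gdist_triangle:
  assumes "connected_graph V E" "x \<in> V" "y \<in> V" "z \<in> V"
  shows "gdist V E x z \<le> gdist V E x y + gdist V E y z"
  using gdist_relpow[OF assms(1,2,3)] gdist_relpow[OF assms(1,3,4)]
  by (intro gdist_le[OF assms(2)]) (auto simp: relpow_add)

lemma gdist_split:
  assumes "connected_graph V E" "x \<in> V" "y \<in> V" "gdist V E x y \<le> m + n"
  obtains z where "z \<in> V" "gdist V E x z \<le> m" "gdist V E z y \<le> n"
proof (cases "gdist V E x y \<le> m")
  case True
  have "gdist V E y y \<le> 0"
    using gdist_le[OF assms(3)] by (metis relpow_0_I)
  with True assms(3) that show ?thesis by auto
next
  case False
  then have "(x, y) \<in> graph_rel V E ^^ (m + (gdist V E x y - m))"
    using gdist_relpow[OF assms(1-3)] by simp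
  then obtain z where "(x, z) \<in> graph_rel V E ^^ m" "(z, y) \<in> graph_rel V E ^^ (gdist V E x y - m)"
    by (auto simp: relpow_add)
  moreover have "z \<in> V"
    using graph_rel_relpow_closed[OF _ assms(2)] calculation(1) .
  ultimately show ?thesis
    using that gdist_le[OF assms(2)] gdist_le[of z] assms(4) by fastforce
qed

lemma gdist_root_diff:
  assumes "connected_graph V E" "x0 \<in> V" "x \<in> V" "y \<in> V"
  shows "\<bar>real (gdist V E x x0) - real (gdist V E y x0)\<bar> \<le> real (gdist V E x y)"
  using gdist_triangle[OF assms(1,3,4,2)] gdist_triangle[OF assms(1,4,3,2)]
    gdist_sym[OF assms(1), of x y]
  by linarith

definition k_step :: "'a set \<Rightarrow> ('a \<Rightarrow> 'a \<Rightarrow> bool) \<Rightarrow> real \<Rightarrow> 'a set \<Rightarrow> ('a \<times> 'a) set" where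
  "k_step V E k X = {(a, b). a \<in> X \<and> b \<in> X \<and> real (gdist V E a b) \<le> k}"

definition k_component :: "'a set \<Rightarrow> ('a \<Rightarrow> 'a \<Rightarrow> bool) \<Rightarrow> real \<Rightarrow> 'a set \<Rightarrow> 'a \<Rightarrow> 'a set" where
  "k_component V E k X x = (k_step V E k X)\<^sup>* `` {x}"

lemma k_connected_iff_rtrancl:
  "k_connected V E k X \<longleftrightarrow> (\<forall>a\<in>X. \<forall>b\<in>X. (a, b) \<in> (k_step V E k X)\<^sup>*)"
proof -
  have "(\<exists>f. f 0 = a \<and> f n = b \<and> (\<forall>i\<le>n. f i \<in> X) \<and> (\<forall>i<n. real (gdist V E (f i) (f (Suc i))) \<le> k))
    \<longleftrightarrow> (a, b) \<in> k_step V E k X ^^ n" (is "?chain \<longleftrightarrow> _") if "a \<in> X" for a b n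
  proof
    assume ?chain
    then obtain f where f: "f 0 = a" "f n = b" "\<forall>i\<le>n. f i \<in> X"
      "\<forall>i<n. real (gdist V E (f i) (f (Suc i))) \<le> k"
      by blast
    then have "\<forall>i<n. (f i, f (Suc i)) \<in> k_step V E k X"
      unfolding k_step_def by simp
    with f(1,2) show "(a, b) \<in> k_step V E k X ^^ n"
      unfolding relpow_fun_conv by blast
  next
    assume "(a, b) \<in> k_step V E k X ^^ n"
    then obtain f where f: "f 0 = a" "f n = b" "\<forall>i<n. (f i, f (Suc i)) \<in> k_step V E k X"
      unfolding relpow_fun_conv by blast
    have "f i \<in> X" if "i \<le> n" for i
      using that f(1,3) \<open>a \<in> X\<close> by (cases i) (auto simp: k_step_def)
    moreover have "\<forall>i<n. real (gdist V E (f i) (f (Suc i))) \<le> k"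
      using f(3) unfolding k_step_def by blast
    ultimately show ?chain
      using f(1,2) by blast
  qed
  then show ?thesis
    unfolding k_connected_def by (simp add: rtrancl_power)
qed

lemma k_step_mono: "X \<subseteq> Y \<Longrightarrow> k_step V E k X \<subseteq> k_step V E k Y"
  unfolding k_step_def by blast

lemma k_component_subset: "x \<in> X \<Longrightarrow> k_component V E k X x \<subseteq> X"
  unfolding k_component_def by (auto elim: rtrancl_induct simp: k_step_def)

lemma self_in_k_component: "x \<in> k_component V E k X x"
  unfolding k_component_def by simp

lemma k_connected_k_component:
  assumes "connected_graph V E"
  shows "k_connected V E k (k_component V E k X x)"
proof -
  let ?C = "k_component V E k X x"
  have reach: "(x, b) \<in> (k_step V E k ?C)\<^sup>*" if "b \<in> ?C" for b
  proof -
    have "(x, b) \<in> (k_step V E k X)\<^sup>*"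
      using that unfolding k_component_def by simp
    then show ?thesis
    proof (induction rule: rtrancl_induct)
      case (step y z)
      then have "y \<in> ?C" "z \<in> ?C"
        unfolding k_component_def by (auto intro: rtrancl_into_rtrancl)
      with step show ?case
        unfolding k_step_def by (auto intro: rtrancl_into_rtrancl)
    qed simp
  qed
  have "sym (k_step V E k ?C)"
    using gdist_sym[OF assms] unfolding k_step_def sym_def by auto
  then have "(a, x) \<in> (k_step V E k ?C)\<^sup>*" if "a \<in> ?C" for a
    using reach[OF that] sym_rtrancl by (blast dest: symD)
  with reach show ?thesis
    unfolding k_connected_iff_rtrancl by (blast intro: rtrancl_trans)
qed

lemma k_connected_subset_k_component:
  assumes "k_connected V E k D" "x \<in> D" "D \<subseteq> X"
  shows "D \<subseteq> k_component V E k X x"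
  using assms rtrancl_mono[OF k_step_mono[OF assms(3)]]
  unfolding k_connected_iff_rtrancl k_component_def by blast

definition layer_index :: "'a set \<Rightarrow> ('a \<Rightarrow> 'a \<Rightarrow> bool) \<Rightarrow> 'a \<Rightarrow> real \<Rightarrow> 'a \<Rightarrow> int" where
  "layer_index V E x0 lam x = \<lceil>real (gdist V E x x0) / lam\<rceil> - 1"

lemma mem_layer_iff:
  assumes "lam > 0"
  shows "x \<in> layer V E x0 lam N \<longleftrightarrow> x \<in> V \<and> N = layer_index V E x0 lam x"
proof -
  have "real_of_int N * lam < real (gdist V E x x0) \<and> real (gdist V E x x0) \<le> (real_of_int N + 1) * lam
    \<longleftrightarrow> \<lceil>real (gdist V E x x0) / lam\<rceil> = N + 1"
    unfolding ceiling_eq_iff using assms by (simp add: field_simps)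
  then show ?thesis
    unfolding layer_def layer_index_def by auto
qed

lemma mem_layer_layer_index:
  "lam > 0 \<Longrightarrow> x \<in> V \<Longrightarrow> x \<in> layer V E x0 lam (layer_index V E x0 lam x)"
  by (simp add: mem_layer_iff)

lemma layer_index_close:
  assumes "lam > 0" "\<bar>real (gdist V E x x0) - real (gdist V E y x0)\<bar> \<le> lam"
  shows "\<bar>layer_index V E x0 lam x - layer_index V E x0 lam y\<bar> \<le> 1"
proof -
  have "\<bar>real (gdist V E x x0) / lam - real (gdist V E y x0) / lam\<bar> \<le> 1"
    using assms by (simp add: field_simps)
  then have "\<lceil>real (gdist V E x x0) / lam\<rceil> \<le> \<lceil>real (gdist V E y x0) / lam\<rceil> + 1"
      "\<lceil>real (gdist V E y x0) / lam\<rceil> \<le> \<lceil>real (gdist V E x x0) / lam\<rceil> + 1"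
    by (simp_all add: ceiling_mono flip: ceiling_add_one)
  then show ?thesis
    unfolding layer_index_def by linarith
qed

lemma k_component_in_skel_V:
  assumes "connected_graph V E" "x \<in> layer V E x0 lam N"
  shows "k_component V E k (layer V E x0 lam N) x \<in> skel_V V E x0 lam k"
  unfolding skel_V_def mem_Collect_eq
proof (intro conjI exI[of _ N] allI impI)
  let ?C = "k_component V E k (layer V E x0 lam N) x"
  show "?C \<noteq> {}"
    using self_in_k_component[of x V E k] by blast
  show "?C \<subseteq> layer V E x0 lam N"
    using assms(2) by (rule k_component_subset)
  show "k_connected V E k ?C"
    using assms(1) by (rule k_connected_k_component)
  show "D = ?C" if "?C \<subseteq> D \<and> D \<subseteq> layer V E x0 lam N \<and> k_connected V E k D" for D
    using that self_in_k_component[of x] k_connected_subset_k_component[of V E k D x] by blast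
qed

lemma skel_V_eq_k_component:
  assumes "connected_graph V E" "lam > 0" "B \<in> skel_V V E x0 lam k" "x \<in> B"
  shows "B = k_component V E k (layer V E x0 lam (layer_index V E x0 lam x)) x"
proof -
  obtain N where N: "B \<subseteq> layer V E x0 lam N" "k_connected V E k B"
    "\<forall>C. B \<subseteq> C \<and> C \<subseteq> layer V E x0 lam N \<and> k_connected V E k C \<longrightarrow> C = B"
    using assms(3) unfolding skel_V_def by blast
  have "x \<in> layer V E x0 lam N"
    using N(1) assms(4) by blast
  then have "N = layer_index V E x0 lam x"
    by (simp add: mem_layer_iff[OF assms(2)])
  moreover have "B \<subseteq> k_component V E k (layer V E x0 lam N) x"
    using k_connected_subset_k_component[OF N(2) assms(4) N(1)] .
  moreover have "k_component V E k (layer V E x0 lam N) x \<subseteq> layer V E x0 lam N"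
    using k_component_subset[OF \<open>x \<in> layer V E x0 lam N\<close>] .
  ultimately show ?thesis
    using N(3) k_connected_k_component[OF assms(1)] by blast
qed

lemma nat_map_eq_k_component:
  assumes "connected_graph V E" "lam > 0" "x \<in> V"
  shows "nat_map V E x0 lam k x = k_component V E k (layer V E x0 lam (layer_index V E x0 lam x)) x"
  unfolding nat_map_def
proof (rule the_equality)
  from assms(2,3) have "x \<in> layer V E x0 lam (layer_index V E x0 lam x)"
    by (rule mem_layer_layer_index)
  then show "k_component V E k (layer V E x0 lam (layer_index V E x0 lam x)) x \<in> skel_V V E x0 lam k \<and>
      x \<in> k_component V E k (layer V E x0 lam (layer_index V E x0 lam x)) x"
    by (simp add: k_component_in_skel_V[OF assms(1)] self_in_k_component)
qed (use skel_V_eq_k_component[OF assms(1,2)] in blast)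

lemma nat_map_in_skel_V:
  "connected_graph V E \<Longrightarrow> lam > 0 \<Longrightarrow> x \<in> V \<Longrightarrow> nat_map V E x0 lam k x \<in> skel_V V E x0 lam k"
  using nat_map_eq_k_component k_component_in_skel_V mem_layer_iff by metis

lemma mem_nat_map:
  "connected_graph V E \<Longrightarrow> lam > 0 \<Longrightarrow> x \<in> V \<Longrightarrow> x \<in> nat_map V E x0 lam k x"
  using nat_map_eq_k_component self_in_k_component by metis

lemma skel_V_nonempty: "B \<in> skel_V V E x0 lam k \<Longrightarrow> B \<noteq> {}"
  unfolding skel_V_def by simp

lemma skel_V_subset: "B \<in> skel_V V E x0 lam k \<Longrightarrow> B \<subseteq> V"
  unfolding skel_V_def layer_def by blast

lemma nat_map_eqI:
  assumes "connected_graph V E" "lam > 0" "B \<in> skel_V V E x0 lam k" "x \<in> B"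
  shows "nat_map V E x0 lam k x = B"
  using nat_map_eq_k_component[OF assms(1,2)] skel_V_eq_k_component[OF assms] skel_V_subset[OF assms(3)]
    assms(4) by blast

lemma nat_map_eq_if_same_layer:
  assumes "connected_graph V E" "lam > 0" "x \<in> V" "y \<in> V"
    and "layer_index V E x0 lam x = layer_index V E x0 lam y" "real (gdist V E x y) \<le> k"
  shows "nat_map V E x0 lam k x = nat_map V E x0 lam k y"
proof -
  let ?L = "layer V E x0 lam (layer_index V E x0 lam x)"
  have "x \<in> ?L"
    by (rule mem_layer_layer_index[OF assms(2,3)])
  have "y \<in> ?L"
    unfolding assms(5) by (rule mem_layer_layer_index[OF assms(2,4)])
  with assms(6) \<open>x \<in> ?L\<close> have "y \<in> k_component V E k ?L x"
    unfolding k_component_def k_step_def by blast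
  then show ?thesis
    using nat_map_eqI[OF assms(1,2) nat_map_in_skel_V[OF assms(1-3)]]
      nat_map_eq_k_component[OF assms(1-3)] by metis
qed

lemma nat_map_adjacent:
  assumes "connected_graph V E" "lam > 0" "(x, y) \<in> graph_rel V E"
  shows "nat_map V E x0 lam k x = nat_map V E x0 lam k y \<or>
    (nat_map V E x0 lam k x, nat_map V E x0 lam k y) \<in> graph_rel (skel_V V E x0 lam k) (skel_E V E x0 lam k)"
proof -
  have "x \<in> V" "y \<in> V" "E x y"
    using assms(3) unfolding graph_rel_def by simp_all
  then have "x \<in> nat_map V E x0 lam k x" "y \<in> nat_map V E x0 lam k y"
      "nat_map V E x0 lam k x \<in> skel_V V E x0 lam k" "nat_map V E x0 lam k y \<in> skel_V V E x0 lam k"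
    using mem_nat_map[OF assms(1,2)] nat_map_in_skel_V[OF assms(1,2)] by blast+
  with \<open>E x y\<close> show ?thesis
    unfolding graph_rel_def skel_E_def by blast
qed

lemma skel_connected:
  assumes "connected_graph V E" "lam > 0"
  shows "connected_graph (skel_V V E x0 lam k) (skel_E V E x0 lam k)"
proof (rule connected_graphI)
  let ?m = "nat_map V E x0 lam k"
  obtain x where "x \<in> V"
    using assms(1) unfolding connected_graph_def by blast
  then show "skel_V V E x0 lam k \<noteq> {}"
    using nat_map_in_skel_V[OF assms] by blast
  show "skel_E V E x0 lam k B C \<Longrightarrow> B \<in> skel_V V E x0 lam k \<and> C \<in> skel_V V E x0 lam k" for B C
    unfolding skel_E_def by blast
  show "skel_E V E x0 lam k B C \<Longrightarrow> skel_E V E x0 lam k C B" for B C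
    using connected_graph_sym[OF assms(1)] unfolding skel_E_def by blast
  fix B C assume B: "B \<in> skel_V V E x0 lam k" and C: "C \<in> skel_V V E x0 lam k"
  then obtain x y where "x \<in> B" "y \<in> C"
    using skel_V_nonempty[OF B] skel_V_nonempty[OF C] by blast
  then have "?m x = B" "?m y = C" "x \<in> V" "y \<in> V"
    using nat_map_eqI[OF assms B] nat_map_eqI[OF assms C] skel_V_subset[OF B] skel_V_subset[OF C]
    by blast+
  have "(?m x, ?m y) \<in> (graph_rel (skel_V V E x0 lam k) (skel_E V E x0 lam k))\<^sup>*"
    using connected_graph_rtrancl[OF assms(1) \<open>x \<in> V\<close> \<open>y \<in> V\<close>]
  proof (induction rule: rtrancl_induct)
    case (step y z)
    then show ?case
      using nat_map_adjacent[OF assms step(2), of x0 k] by (metis rtrancl_into_rtrancl)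
  qed simp
  with \<open>?m x = B\<close> \<open>?m y = C\<close> show "(B, C) \<in> (graph_rel (skel_V V E x0 lam k) (skel_E V E x0 lam k))\<^sup>*"
    by simp
qed

lemma gdist_le_1_iff:
  assumes "connected_graph V E" "x \<in> V" "y \<in> V"
  shows "gdist V E x y \<le> 1 \<longleftrightarrow> x = y \<or> (x, y) \<in> graph_rel V E"
proof
  show "gdist V E x y \<le> 1 \<Longrightarrow> x = y \<or> (x, y) \<in> graph_rel V E"
    using gdist_relpow[OF assms] by (auto simp: le_Suc_eq elim: relpow_0_E)
  assume "x = y \<or> (x, y) \<in> graph_rel V E"
  then have "(x, y) \<in> graph_rel V E ^^ 0 \<or> (x, y) \<in> graph_rel V E ^^ 1"
    by auto
  then show "gdist V E x y \<le> 1"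
    using gdist_le[OF assms(2)] by (meson le_trans zero_le_one order_refl)
qed

lemma gdist_le_2_if_repetition:
  assumes "connected_graph V E" "a \<in> V" "b \<in> V" "c \<in> V" "d \<in> V"
    and "gdist V E a b \<le> 1" "gdist V E b c \<le> 1" "gdist V E c d \<le> 1"
    and "a = b \<or> b = c \<or> a = c"
  shows "gdist V E a d \<le> 2"
  using gdist_triangle[OF assms(1,2,3,5)] gdist_triangle[OF assms(1,3,4,5)] assms(6-9) by auto

lemma gdist_nat_map_le_1:
  assumes "connected_graph V E" "lam > 0" "x \<in> V" "y \<in> V" "gdist V E x y \<le> 1"
  shows "gdist (skel_V V E x0 lam k) (skel_E V E x0 lam k)
    (nat_map V E x0 lam k x) (nat_map V E x0 lam k y) \<le> 1"
proof -
  have "x = y \<or> (x, y) \<in> graph_rel V E"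
    using gdist_le_1_iff[OF assms(1,3,4)] assms(5) by blast
  then have "nat_map V E x0 lam k x = nat_map V E x0 lam k y \<or>
      (nat_map V E x0 lam k x, nat_map V E x0 lam k y) \<in> graph_rel (skel_V V E x0 lam k) (skel_E V E x0 lam k)"
    using nat_map_adjacent[OF assms(1,2)] by blast
  then show ?thesis
    using gdist_le_1_iff[OF skel_connected[OF assms(1,2)] nat_map_in_skel_V[OF assms(1-3)]
        nat_map_in_skel_V[OF assms(1,2,4)]] by blast
qed

lemma nat_map_close_triple:
  assumes "connected_graph V E" "x0 \<in> V" "lam > 0" "x \<in> V" "y \<in> V" "z \<in> V"
    and "real (gdist V E x y) \<le> min lam k" "real (gdist V E y z) \<le> min lam k"
    and "real (gdist V E x z) \<le> min lam k"
  shows "nat_map V E x0 lam k x = nat_map V E x0 lam k y \<or> nat_map V E x0 lam k y = nat_map V E x0 lam k z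
    \<or> nat_map V E x0 lam k x = nat_map V E x0 lam k z"
proof -
  let ?i = "layer_index V E x0 lam"
  have close: "\<bar>?i u - ?i v\<bar> \<le> 1" if "u \<in> V" "v \<in> V" "real (gdist V E u v) \<le> min lam k" for u v
    using gdist_root_diff[OF assms(1,2) that(1,2)] that(3) by (intro layer_index_close[OF assms(3)]) simp
  have "?i x = ?i y \<or> ?i y = ?i z \<or> ?i x = ?i z"
    using close[OF assms(4,5,7)] close[OF assms(5,6,8)] close[OF assms(4,6,9)] by presburger
  then show ?thesis
    using nat_map_eq_if_same_layer[OF assms(1,3)] assms(4-9) by auto
qed

lemma gdist_nat_map_le_2_if_le_3:
  assumes "connected_graph V E" "x0 \<in> V" "lam \<ge> 2" "k \<ge> 2" "a \<in> V" "b \<in> V" "gdist V E a b \<le> 3"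
  shows "gdist (skel_V V E x0 lam k) (skel_E V E x0 lam k)
    (nat_map V E x0 lam k a) (nat_map V E x0 lam k b) \<le> 2"
proof -
  let ?m = "nat_map V E x0 lam k"
  have lam: "lam > 0"
    using assms(3) by simp
  obtain c where c: "c \<in> V" "gdist V E a c \<le> 1" "gdist V E c b \<le> 2"
    using gdist_split[OF assms(1,5,6), of 1 2] assms(7) by auto
  obtain d where d: "d \<in> V" "gdist V E c d \<le> 1" "gdist V E d b \<le> 1"
    using gdist_split[OF assms(1) c(1) assms(6), of 1 1] c(3) by auto
  have "gdist V E a d \<le> 2"
    using gdist_triangle[OF assms(1,5) c(1) d(1)] c(2) d(2) by simp
  then have "?m a = ?m c \<or> ?m c = ?m d \<or> ?m a = ?m d"
    using c(2) d(2) assms(3,4) by (intro nat_map_close_triple[OF assms(1,2) lam assms(5) c(1) d(1)]) auto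
  then show ?thesis
    by (rule gdist_le_2_if_repetition[OF skel_connected[OF assms(1) lam]
          nat_map_in_skel_V[OF assms(1) lam assms(5)] nat_map_in_skel_V[OF assms(1) lam c(1)]
          nat_map_in_skel_V[OF assms(1) lam d(1)] nat_map_in_skel_V[OF assms(1) lam assms(6)]
          gdist_nat_map_le_1[OF assms(1) lam assms(5) c(1,2)] gdist_nat_map_le_1[OF assms(1) lam c(1) d(1,2)]
          gdist_nat_map_le_1[OF assms(1) lam d(1) assms(6) d(3)]])
qed

theorem lemma5:
  fixes V :: "'a set" and E :: "'a \<Rightarrow> 'a \<Rightarrow> bool" and x0 :: 'a
    and lam k :: real and P Q :: "'a set set"
  assumes "connected_graph V E" and "x0 \<in> V" and "lam \<ge> 1" and "k \<ge> 1"
  defines "V' \<equiv> skel_V V E x0 lam k"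
      and "E' \<equiv> skel_E V E x0 lam k"
      and "r' \<equiv> nat_map V E x0 lam k x0"
  assumes "P \<in> skel_V V' E' r' 2 2" and "Q \<in> skel_V V' E' r' 2 2"
      and "r_disjoint (skel_V V' E' r' 2 2) (skel_E V' E' r' 2 2) 2 {P} {Q}"
  shows "r_disjoint V' E' 3 {v \<in> V'. nat_map V' E' r' 2 2 v = P} {v \<in> V'. nat_map V' E' r' 2 2 v = Q}"
  unfolding r_disjoint_def
proof (intro ballI)
  have lam: "lam > 0"
    using assms(3) by simp
  have G': "connected_graph V' E'"
    unfolding V'_def E'_def using assms(1) lam by (rule skel_connected)
  have "r' \<in> V'"
    unfolding r'_def V'_def using assms(1) lam assms(2) by (rule nat_map_in_skel_V)
  fix a b
  assume "a \<in> {v \<in> V'. nat_map V' E' r' 2 2 v = P}" "b \<in> {v \<in> V'. nat_map V' E' r' 2 2 v = Q}"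
  then have "a \<in> V'" "b \<in> V'"
    "gdist (skel_V V' E' r' 2 2) (skel_E V' E' r' 2 2) (nat_map V' E' r' 2 2 a) (nat_map V' E' r' 2 2 b) > 2"
    using assms(10) unfolding r_disjoint_def by auto
  then show "3 < real (gdist V' E' a b)"
    using gdist_nat_map_le_2_if_le_3[OF G' \<open>r' \<in> V'\<close>, of 2 2 a b] by fastforce
qed
end
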